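(* Let $H:\mathbb{D}\times\mathbb{D}\to\Omega_1$, $H(z,w)=\left(\frac{z-w}{1-zw},\,-i\frac{z+w}{1-zw}\right)$ (a biholomorphism), let $F:\mathbb{G}\to\mathcal{D}_1$, $F(s,p)=\left(i\frac{1+p}{1-p},\,-i\frac{s}{1-p}\right)$ (a biholomorphism), and let $sym:\mathbb{D}\times\mathbb{D}\to\mathbb{G}$, $sym(z_1,z_2)=(z_1+z_2,z_1z_2)$. Then there is a proper holomorphic map $sym_{\Omega_1}:\Omega_1\to\mathcal{D}_1$ such that $sym_{\Omega_1}\circ H=F\circ sym$ on $\mathbb{D}\times\mathbb{D}$.
   Context: $\mathbb{D}$ is the open unit disc in $\mathbb{C}$. $\mathbb{G}=\{(z_1+z_2,z_1z_2):z_1,z_2\in\mathbb{D}\}$. $\Omega_1=\{(u,v)\in\mathbb{C}^2: |u^2|+|v^2|-1<|u^2+v^2-1|\}$. $\mathcal{D}_1=\{(z_1,z_2)\in\mathbb{C}^2: 1+|z_1|^2-|z_2|^2>|1+z_1^2-z_2^2|,\ \mathrm{Im}(z_1(1+\overline{z_2}))>0\}$. *)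

theory Defs
  imports "HOL-Analysis.Analysis"
begin

definition holomorphic2_on ::
  "(complex \<times> complex \<Rightarrow> complex \<times> complex) \<Rightarrow> (complex \<times> complex) set \<Rightarrow> bool" where
  "holomorphic2_on f S \<longleftrightarrow>
     (\<forall>x\<in>S. \<exists>f'. (f has_derivative f') (at x) \<and>
        (\<forall>c a b. f' (c * a, c * b) = (c * fst (f' (a, b)), c * snd (f' (a, b)))))"

definition proper_map_on :: "('a::topological_space \<Rightarrow> 'b::topological_space) \<Rightarrow> 'a set \<Rightarrow> 'b set \<Rightarrow> bool" where
  "proper_map_on f A B \<longleftrightarrow> f ` A \<subseteq> B \<and>
     (\<forall>K. K \<subseteq> B \<and> compact K \<longrightarrow> compact {x\<in>A. f x \<in> K})"

definition unit_disc :: "complex set" where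
  "unit_disc = {z. norm z < 1}"

definition symmetrized_bidisc :: "(complex \<times> complex) set" where
  "symmetrized_bidisc = {(z1 + z2, z1 * z2) | z1 z2. z1 \<in> unit_disc \<and> z2 \<in> unit_disc}"

definition Omega1 :: "(complex \<times> complex) set" where
  "Omega1 = {(u, v). norm (u\<^sup>2) + norm (v\<^sup>2) - 1 < norm (u\<^sup>2 + v\<^sup>2 - 1)}"

definition D1 :: "(complex \<times> complex) set" where
  "D1 = {(z1, z2). 1 + (norm z1)\<^sup>2 - (norm z2)\<^sup>2 > norm (1 + z1\<^sup>2 - z2\<^sup>2)
                   \<and> Im (z1 * (1 + cnj z2)) > 0}"

definition Hmap :: "complex \<times> complex \<Rightarrow> complex \<times> complex" where
  "Hmap = (\<lambda>(z, w). ((z - w) / (1 - z * w), - \<i> * ((z + w) / (1 - z * w))))"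

definition Fmap :: "complex \<times> complex \<Rightarrow> complex \<times> complex" where
  "Fmap = (\<lambda>(s, p). (\<i> * ((1 + p) / (1 - p)), - \<i> * (s / (1 - p))))"

definition symmap :: "complex \<times> complex \<Rightarrow> complex \<times> complex" where
  "symmap = (\<lambda>(z1, z2). (z1 + z2, z1 * z2))"

end

theory Submission
  imports Defs
begin

(* Let s be the principal square root of 1 - u^2 - v^2 and take (u, v) |-> (i s, v).
   The inequality defining Omega1 at (u, v) is the first inequality defining D1 at (i s, v),
   and by the identity
     (1 + |s|^2 - |v|^2)^2 - |1 - s^2 - v^2|^2 = 4 ((Re s)^2 - (Im v)^2 - (Re (s conj v))^2)
   it forces |Re (s conj v)| < Re s, which is the second one. Hence Omega1 is exactly the
   preimage of D1, and on Omega1 the point 1 - u^2 - v^2 stays off the branch cut, so the map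
   is holomorphic. Composed with (a, b) |-> (-a^2, b), which is injective on D1 because
   Re (-i a) > 0 there, the map becomes the polynomial map (u, v) |-> (1 - u^2 - v^2, v),
   whose preimages of compact sets are compact; this gives properness. Finally, at H(z, w)
   the number 1 - u^2 - v^2 is the square of the Cayley transform (1 + zw)/(1 - zw), which
   has positive real part, so the principal root recovers F(sym(z, w)). *)

lemma Re_csqrt_pos_imp_notin_nonpos_Reals:
  assumes "0 < Re (csqrt z)"
  shows "z \<notin> \<real>\<^sub>\<le>\<^sub>0"
proof
  assume "z \<in> \<real>\<^sub>\<le>\<^sub>0"
  then have "csqrt z = \<i> * sqrt \<bar>Re z\<bar>"
    by (simp add: complex_nonpos_Reals_iff)
  with assms show False by simp
qed

lemma Re_Cayley_pos:
  fixes p :: complex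
  assumes "cmod p < 1"
  shows "0 < Re ((1 + p) / (1 - p))"
proof -
  have "Re ((1 + p) / (1 - p)) = (1 - (cmod p)^2) / (cmod (1 - p))^2"
    by (simp add: Re_divide' cmod_power2 algebra_simps) (simp add: power2_eq_square)
  moreover have "0 < 1 - (cmod p)^2"
    using assms by (simp add: abs_square_less_1)
  moreover have "1 - p \<noteq> 0"
    using assms by auto
  ultimately show ?thesis by simp
qed

lemma bounded_vimage_power:
  fixes S :: "'a::real_normed_div_algebra set"
  assumes "bounded S" "0 < n"
  shows "bounded {z. z ^ n \<in> S}"
proof -
  obtain B where B: "\<And>y. y \<in> S \<Longrightarrow> norm y \<le> B"
    using assms(1) bounded_iff by blast
  have "norm z \<le> max 1 B" if "z ^ n \<in> S" for z
  proof (cases "norm z \<le> 1")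
    case False
    then have "norm z \<le> norm z ^ n"
      using assms(2) by (simp add: self_le_power)
    also have "\<dots> \<le> B"
      using B[OF that] by (simp add: norm_power)
    finally show ?thesis by simp
  qed simp
  then show ?thesis
    unfolding bounded_iff by blast
qed

lemma norm_one_minus_squares_identity:
  fixes s v :: complex
  shows "(1 + (cmod s)^2 - (cmod v)^2)^2 - (cmod (1 - s^2 - v^2))^2
         = 4 * ((Re s)^2 - (Im v)^2 - (Re (s * cnj v))^2)"
proof -
  obtain a b c d where "s = Complex a b" "v = Complex c d"
    by (metis complex_surj)
  then show ?thesis
    by (simp only: cmod_power2) (simp add: power2_eq_square algebra_simps)
qed

lemma abs_Re_mult_cnj_less:
  fixes s v :: complex
  assumes "cmod (1 - s^2 - v^2) < 1 + (cmod s)^2 - (cmod v)^2"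
  shows "\<bar>Re (s * cnj v)\<bar> < \<bar>Re s\<bar>"
proof -
  have "(cmod (1 - s^2 - v^2))^2 < (1 + (cmod s)^2 - (cmod v)^2)^2"
    using assms by (simp add: power_strict_mono)
  then have "(Re (s * cnj v))^2 < (Re s)^2"
    using norm_one_minus_squares_identity[of s v] by (smt (verit) zero_le_power2)
  then show ?thesis
    by (metis abs_ge_zero power2_abs power_less_imp_less_base)
qed

lemma i_mult_in_D1_iff:
  fixes s v :: complex
  shows "(\<i> * s, v) \<in> D1 \<longleftrightarrow>
           cmod (1 - s^2 - v^2) < 1 + (cmod s)^2 - (cmod v)^2 \<and> 0 < Re s"
proof -
  have "1 + (\<i> * s)^2 - v^2 = 1 - s^2 - v^2"
    by (simp add: power_mult_distrib)
  moreover have "cmod (\<i> * s) = cmod s"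
    by (simp add: norm_mult)
  moreover have "Im (\<i> * s * (1 + cnj v)) = Re s + Re (s * cnj v)"
    by (simp add: algebra_simps)
  ultimately have "(\<i> * s, v) \<in> D1 \<longleftrightarrow>
      cmod (1 - s^2 - v^2) < 1 + (cmod s)^2 - (cmod v)^2 \<and> 0 < Re s + Re (s * cnj v)"
    unfolding D1_def by (simp only: mem_Collect_eq prod.case)
  then show ?thesis
    using abs_Re_mult_cnj_less[of s v] by auto
qed

lemma Omega1_iff:
  fixes u v s :: complex
  assumes "s^2 = 1 - u^2 - v^2"
  shows "(u, v) \<in> Omega1 \<longleftrightarrow>
           cmod (1 - s^2 - v^2) < 1 + (cmod s)^2 - (cmod v)^2"
proof -
  have "u^2 = 1 - s^2 - v^2" and "u^2 + v^2 - 1 = - (s^2)"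
    using assms by simp_all
  then have "cmod (u^2) = cmod (1 - s^2 - v^2)" and "cmod (u^2 + v^2 - 1) = (cmod s)^2"
    by (simp_all only: norm_minus_cancel norm_power)
  then show ?thesis
    unfolding Omega1_def by (simp add: norm_power) linarith
qed

definition sym_Omega1 :: "complex \<times> complex \<Rightarrow> complex \<times> complex" where
  "sym_Omega1 = (\<lambda>(u, v). (\<i> * csqrt (1 - u^2 - v^2), v))"

lemma sym_Omega1_in_D1_iff: "sym_Omega1 x \<in> D1 \<longleftrightarrow> x \<in> Omega1"
proof -
  obtain u v where x: "x = (u, v)"
    by fastforce
  define s where "s = csqrt (1 - u^2 - v^2)"
  have "x \<in> Omega1 \<longleftrightarrow> cmod (1 - s^2 - v^2) < 1 + (cmod s)^2 - (cmod v)^2"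
    unfolding x s_def by (rule Omega1_iff) simp
  moreover have "0 < Re s" if "cmod (1 - s^2 - v^2) < 1 + (cmod s)^2 - (cmod v)^2"
    using abs_Re_mult_cnj_less[OF that] Re_csqrt[of "1 - u^2 - v^2"] unfolding s_def by linarith
  moreover have "sym_Omega1 x = (\<i> * s, v)"
    unfolding x sym_Omega1_def s_def by simp
  ultimately show ?thesis
    using i_mult_in_D1_iff[of s v] by auto
qed

lemma Re_csqrt_pos_on_Omega1:
  assumes "(u, v) \<in> Omega1"
  shows "0 < Re (csqrt (1 - u^2 - v^2))"
  using assms sym_Omega1_in_D1_iff[of "(u, v)"] by (simp add: sym_Omega1_def i_mult_in_D1_iff)

lemma sym_Omega1_Hmap:
  assumes "z \<in> unit_disc" "w \<in> unit_disc"
  shows "sym_Omega1 (Hmap (z, w)) = Fmap (symmap (z, w))"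
proof -
  have "cmod (z * w) < 1"
    using assms unfolding unit_disc_def
    by (simp add: norm_mult) (metis mult_strict_mono' norm_ge_zero mult_1_right)
  then have "1 - z * w \<noteq> 0"
    by auto
  have minus_i_sq: "(- \<i> * c)^2 = - (c^2)" for c :: complex
    by (simp add: power_mult_distrib)
  have "1 - ((z - w) / (1 - z * w))^2 - (- \<i> * ((z + w) / (1 - z * w)))^2
         = ((1 + z * w) / (1 - z * w))^2"
    unfolding minus_i_sq using \<open>1 - z * w \<noteq> 0\<close>
    by (simp add: power_divide field_simps) algebra
  moreover have "csqrt (((1 + z * w) / (1 - z * w))^2) = (1 + z * w) / (1 - z * w)"
    using Re_Cayley_pos[OF \<open>cmod (z * w) < 1\<close>] by (intro csqrt_unique) auto
  ultimately show ?thesis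
    unfolding sym_Omega1_def Hmap_def Fmap_def symmap_def by simp
qed

lemma holomorphic2_on_sym_Omega1: "holomorphic2_on sym_Omega1 Omega1"
  unfolding holomorphic2_on_def
proof (clarify)
  fix u v assume "(u, v) \<in> Omega1"
  define D where "D = inverse (2 * csqrt (1 - u^2 - v^2))"
  have off_cut: "1 - u^2 - v^2 \<notin> \<real>\<^sub>\<le>\<^sub>0"
    using Re_csqrt_pos_on_Omega1[OF \<open>(u, v) \<in> Omega1\<close>]
    by (rule Re_csqrt_pos_imp_notin_nonpos_Reals)
  have csqrt_deriv: "(csqrt has_derivative (\<lambda>y. D * y)) (at (1 - u^2 - v^2))"
    using has_field_derivative_csqrt[OF off_cut, folded D_def]
    unfolding has_field_derivative_def by simp
  have inner_deriv: "((\<lambda>x::complex \<times> complex. 1 - (fst x)^2 - (snd x)^2) has_derivative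
      (\<lambda>k. - (2 * u * fst k) - 2 * v * snd k)) (at (u, v))"
    by (auto intro!: derivative_eq_intros simp: algebra_simps)
  have "((\<lambda>x::complex \<times> complex. csqrt (1 - (fst x)^2 - (snd x)^2)) has_derivative
      (\<lambda>k. D * (- (2 * u * fst k) - 2 * v * snd k))) (at (u, v))"
    using has_derivative_compose[OF inner_deriv, of csqrt] csqrt_deriv by simp
  then have "(sym_Omega1 has_derivative
      (\<lambda>k. (\<i> * (D * (- (2 * u * fst k) - 2 * v * snd k)), snd k))) (at (u, v))"
    unfolding sym_Omega1_def case_prod_beta
    by (intro has_derivative_Pair has_derivative_mult_right has_derivative_snd has_derivative_ident)
  then show "\<exists>f'. (sym_Omega1 has_derivative f') (at (u, v)) \<and>
      (\<forall>c a b. f' (c * a, c * b) = (c * fst (f' (a, b)), c * snd (f' (a, b))))"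
    by (intro exI conjI) (auto simp: algebra_simps)
qed

lemma compact_vimage_one_minus_squares:
  fixes L :: "(complex \<times> complex) set"
  assumes "compact L"
  shows "compact ((\<lambda>(u, v). (1 - u^2 - v^2, v)) -` L)"
proof -
  define q :: "complex \<times> complex \<Rightarrow> complex \<times> complex"
    where "q = (\<lambda>(u, v). (1 - u^2 - v^2, v))"
  have "continuous_on UNIV q"
    unfolding q_def case_prod_beta by (auto intro!: continuous_intros)
  then have "closed (q -` L)"
    using assms continuous_on_eq_continuous_at
    by (intro continuous_closed_vimage compact_imp_closed) blast+
  define R where "R = (\<lambda>(a, b). 1 - a - b^2) ` L"
  have "q -` L \<subseteq> {u. u^2 \<in> R} \<times> snd ` L"
  proof
    fix x assume "x \<in> q -` L"
    moreover obtain u v where x: "x = (u, v)"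
      by fastforce
    ultimately have "(1 - u^2 - v^2, v) \<in> L"
      by (simp add: q_def)
    moreover have "u^2 = (\<lambda>(a, b). 1 - a - b^2) (1 - u^2 - v^2, v)"
      by simp
    ultimately show "x \<in> {u. u^2 \<in> R} \<times> snd ` L"
      unfolding R_def x by (auto intro: rev_image_eqI)
  qed
  moreover have "bounded ({u. u^2 \<in> R} \<times> snd ` L)"
    unfolding R_def case_prod_beta using assms
    by (intro bounded_Times bounded_vimage_power compact_imp_bounded compact_continuous_image)
      (auto intro!: continuous_intros)
  ultimately have "bounded (q -` L)"
    by (rule bounded_subset[rotated])
  with \<open>closed (q -` L)\<close> show ?thesis
    unfolding q_def by (simp add: compact_eq_bounded_closed)
qed

lemma vimage_sym_Omega1:
  assumes "K \<subseteq> D1"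
  shows "sym_Omega1 -` K =
           (\<lambda>(u, v). (1 - u^2 - v^2, v)) -` ((\<lambda>(a, b). (- (a^2), b)) ` K)"
    (is "_ = ?q -` (?sq ` K)")
proof (intro equalityI subsetI)
  fix x assume "x \<in> sym_Omega1 -` K"
  moreover obtain u v where x: "x = (u, v)"
    by fastforce
  moreover have "?q (u, v) = ?sq (sym_Omega1 (u, v))"
    by (simp add: sym_Omega1_def power_mult_distrib)
  ultimately show "x \<in> ?q -` (?sq ` K)"
    by auto
next
  fix x assume "x \<in> ?q -` (?sq ` K)"
  then obtain a b where "(a, b) \<in> K" and ab: "?q x = (- (a^2), b)"
    by auto
  obtain u v where x: "x = (u, v)"
    by fastforce
  define t where "t = - \<i> * a"
  then have a: "a = \<i> * t"
    by simp
  then have "0 < Re t"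
    using \<open>(a, b) \<in> K\<close> assms i_mult_in_D1_iff by blast
  moreover have "1 - u^2 - v^2 = t^2" "v = b"
    using ab unfolding x a by (auto simp: power_mult_distrib)
  ultimately show "x \<in> sym_Omega1 -` K"
    using \<open>(a, b) \<in> K\<close> unfolding x a by (simp add: sym_Omega1_def csqrt_unique)
qed

lemma proper_map_on_sym_Omega1: "proper_map_on sym_Omega1 Omega1 D1"
  unfolding proper_map_on_def
proof (intro conjI allI impI)
  show "sym_Omega1 ` Omega1 \<subseteq> D1"
    using sym_Omega1_in_D1_iff by blast
  fix K assume K: "K \<subseteq> D1 \<and> compact K"
  then have "compact ((\<lambda>(a, b). (- (a^2), b)) ` K)"
    unfolding case_prod_beta by (auto intro!: compact_continuous_image continuous_intros)
  then have "compact (sym_Omega1 -` K)"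
    using K vimage_sym_Omega1 compact_vimage_one_minus_squares by simp
  moreover have "{x \<in> Omega1. sym_Omega1 x \<in> K} = sym_Omega1 -` K"
    using K sym_Omega1_in_D1_iff by blast
  ultimately show "compact {x \<in> Omega1. sym_Omega1 x \<in> K}"
    by simp
qed

theorem theorem4p7:
  shows "\<exists>g. holomorphic2_on g Omega1 \<and> proper_map_on g Omega1 D1 \<and>
           (\<forall>z\<in>unit_disc. \<forall>w\<in>unit_disc. g (Hmap (z, w)) = Fmap (symmap (z, w)))"
  using holomorphic2_on_sym_Omega1 proper_map_on_sym_Omega1 sym_Omega1_Hmap by blast

end
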